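(* Let $K\subset\mathbb{R}^d$ be a non-empty compact set, let $\rho\in(0,1)$, let $\mathcal{B}$ be an inner regular partition of $K$ with ratio $\rho$, and let $\mathcal{T}$ be the corresponding tree. Then $\dim_{\mathrm{L}}\partial\mathcal{T}\leq\dim_{\mathrm{L}} K$.
   Context: $B(x,r)$ is the closed ball; $N_r(F)$ is the minimal number of closed $r$-balls centred in $F$ covering $F$; $\dim_{\mathrm{L}} K=\sup\{s>0:\exists C>0\ \forall 0<r\leq R<1\ \forall x\in K,\ N_r(B(x,R)\cap K)\geq C(R/r)^s\}$. Inner regular partition: for $\rho\in(0,1)$, a family $\mathcal{B}=\{(Q_{i,k},x_{i,k}):k\in\mathbb{N}\cup\{0\},\ i\in\mathcal{N}_k\}$ of non-empty Borel sets $Q_{i,k}$ with distinguished points $x_{i,k}\in K\cap Q_{i,k}$ such that, for some constants $c,C>0$: (i) $\#\mathcal{N}_0=1$; (ii) for each $k$, $K$ is the disjoint union of $Q_{i,k}$, $i\in\mathcal{N}_k$; (iii) if $k\leq m$, $i\in\mathcal{N}_k$, $j\in\mathcal{N}_m$ then either $Q_{i,k}\cap Q_{j,m}=\varnothing$ or $Q_{j,m}\subset Q_{i,k}$; (iv) $B(x_{i,k},c\rho^k)\subset Q_{i,k}\subset B(x_{i,k},C\rho^k)$ for all $k,i$; (v) $\{x_{i,k}:i\in\mathcal{N}_k\}\subset\{x_{i,k+1}:i\in\mathcal{N}_{k+1}\}$. The number of children (sets of level $k+1$ contained in a given set of level $k$) is bounded by some $M\in\mathbb{N}$. Corresponding tree: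 with alphabet $\mathcal{A}=\{1,\ldots,M\}$, label the root set of level $0$ by the empty word, and inductively, if the set with label $\mathtt{a}\in\mathcal{A}^k$ has children $R_1,\ldots,R_j$ ($j\leq M$), label $R_i$ by $\mathtt{a}i$. $\mathcal{T}$ is the set of all labels, $\mathcal{T}_n$ the labels of length $n$. For a word $\mathtt{a}$ of length $n$, $[\mathtt{a}]$ is the set of infinite sequences in $\mathcal{A}^{\mathbb{N}}$ beginning with $\mathtt{a}$, and $\partial\mathcal{T}=\bigcap_n\bigcup_{\mathtt{a}\in\mathcal{T}_n}[\mathtt{a}]$. The lower dimension of $\partial\mathcal{T}$ is defined as $\dim_{\mathrm{L}}\partial\mathcal{T}=\sup\{s>0:\exists C>0\ \forall 0\leq m\leq k\ \forall\mathtt{a}\in\mathcal{T}_m,\ \#\{\mathtt{b}\in\mathcal{T}_k:[\mathtt{b}]\subset[\mathtt{a}]\}\geq C\rho^{(m-k)s}\}$. *)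

theory Defs
  imports "HOL-Analysis.Analysis"
begin

definition covnum :: "real \<Rightarrow> 'a::metric_space set \<Rightarrow> nat" where
  "covnum r F = Inf {card S | S. finite S \<and> S \<subseteq> F \<and> F \<subseteq> (\<Union>y\<in>S. cball y r)}"

text \<open>Lower dimension of K (convention: supremum of the empty set is 0).\<close>
definition lower_dim :: "'a::metric_space set \<Rightarrow> real" where
  "lower_dim K = Sup (insert 0 {s. s > 0 \<and> (\<exists>C>0. \<forall>r R. 0 < r \<and> r \<le> R \<and> R < 1 \<longrightarrow>
       (\<forall>x\<in>K. real (covnum r (cball x R \<inter> K)) \<ge> C * (R / r) powr s))})"

definition inner_regular_partition ::
  "'a::euclidean_space set \<Rightarrow> real \<Rightarrow> (nat \<Rightarrow> 'i set) \<Rightarrow> (nat \<Rightarrow> 'i \<Rightarrow> 'a set)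
     \<Rightarrow> (nat \<Rightarrow> 'i \<Rightarrow> 'a) \<Rightarrow> bool" where
  "inner_regular_partition K \<rho> N Q x \<longleftrightarrow>
     (\<forall>k. \<forall>i\<in>N k. Q k i \<noteq> {} \<and> Q k i \<in> sets borel \<and> x k i \<in> K \<inter> Q k i) \<and>
     card (N 0) = 1 \<and>
     (\<forall>k. (\<Union>i\<in>N k. Q k i) = K \<and> (\<forall>i\<in>N k. \<forall>j\<in>N k. i \<noteq> j \<longrightarrow> Q k i \<inter> Q k j = {})) \<and>
     (\<forall>k m. k \<le> m \<longrightarrow> (\<forall>i\<in>N k. \<forall>j\<in>N m. Q k i \<inter> Q m j = {} \<or> Q m j \<subseteq> Q k i)) \<and>
     (\<exists>c>0. \<exists>C>0. \<forall>k. \<forall>i\<in>N k.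
         cball (x k i) (c * \<rho> ^ k) \<inter> K \<subseteq> Q k i \<and> Q k i \<subseteq> cball (x k i) (C * \<rho> ^ k)) \<and>
     (\<forall>k. x k ` N k \<subseteq> x (Suc k) ` N (Suc k))"

definition children :: "(nat \<Rightarrow> 'i set) \<Rightarrow> (nat \<Rightarrow> 'i \<Rightarrow> 'a set) \<Rightarrow> nat \<Rightarrow> 'i \<Rightarrow> 'i set" where
  "children N Q k i = {j \<in> N (Suc k). Q (Suc k) j \<subseteq> Q k i}"

text \<open>T (set of words over positive naturals) with labelling lab (word of length k
  \<mapsto> index of a level-k set) is a tree corresponding to the partition: the root is the
  empty word, and the children of the set labelled a are labelled a@[1],...,a@[j].\<close>
definition corresponding_tree ::
  "(nat \<Rightarrow> 'i set) \<Rightarrow> (nat \<Rightarrow> 'i \<Rightarrow> 'a set) \<Rightarrow> nat list set \<Rightarrow> (nat list \<Rightarrow> 'i) \<Rightarrow> bool" where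
  "corresponding_tree N Q T lab \<longleftrightarrow>
     [] \<in> T \<and> lab [] \<in> N 0 \<and>
     (\<forall>w\<in>T. w \<noteq> [] \<longrightarrow> butlast w \<in> T) \<and>
     (\<forall>a\<in>T. {n. a @ [n] \<in> T} = {1..card (children N Q (length a) (lab a))} \<and>
        bij_betw (\<lambda>n. lab (a @ [n])) {1..card (children N Q (length a) (lab a))}
                 (children N Q (length a) (lab a)))"

definition cyl :: "nat list \<Rightarrow> (nat \<Rightarrow> nat) set" where
  "cyl a = {\<omega>. \<forall>i<length a. \<omega> i = a ! i}"

definition tree_boundary :: "nat list set \<Rightarrow> (nat \<Rightarrow> nat) set" where
  "tree_boundary T = (\<Inter>n. \<Union>a\<in>{a\<in>T. length a = n}. cyl a)"

text \<open>Lower dimension of the boundary of T w.r.t. ratio rho (sup of empty set is 0).\<close>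
definition lower_dim_tree :: "real \<Rightarrow> nat list set \<Rightarrow> real" where
  "lower_dim_tree \<rho> T = Sup (insert 0 {s. s > 0 \<and> (\<exists>C>0. \<forall>m k. m \<le> k \<longrightarrow>
       (\<forall>a\<in>T. length a = m \<longrightarrow>
          real (card {b\<in>T. length b = k \<and> cyl b \<subseteq> cyl a}) \<ge> C * \<rho> powr ((real m - real k) * s)))})"

end

theory Submission
  imports Defs
begin

text \<open>
  Fix x in K and scales 0 < r \<le> R < 1. Take a cell of some level m that contains x, lies in
  B(x, R) and has \<rho>^m comparable to R, and the finest level k at which distinct distinguished
  points are still more than 2r apart, so that \<rho>^k is comparable to r. The level-k descendants
  of the cell give that many 2r-separated points of B(x, R) \<inter> K, each needing its own r-ball,
  and the tree bound C \<rho>^((m-k)s) on their number is comparable to (R/r)^s. Hence every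
  exponent admissible for the tree is admissible for K. A volume argument bounds the exponents
  admissible for K by the dimension, so the suprema compare.
\<close>

lemma card_separated_in_cball_le:
  fixes S :: "'a::euclidean_space set"
  assumes "finite S" and "S \<subseteq> cball y R" and "0 < \<delta>" and "0 \<le> R"
    and sep: "\<And>p q. p \<in> S \<Longrightarrow> q \<in> S \<Longrightarrow> p \<noteq> q \<Longrightarrow> \<delta> \<le> dist p q"
  shows "real (card S) \<le> ((2 * R + \<delta>) / \<delta>) ^ DIM('a)"
proof -
  let ?v = "unit_ball_vol (DIM('a))"
  have disj: "disjoint_family_on (\<lambda>p. ball p (\<delta>/2)) S"
    unfolding disjoint_family_on_def
  proof (intro ballI impI)
    fix p q assume "p \<in> S" "q \<in> S" "p \<noteq> q"
    then have "\<delta> \<le> dist p q" by (rule sep)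
    then show "ball p (\<delta>/2) \<inter> ball q (\<delta>/2) = {}"
      by (auto simp: dist_commute) (smt (verit) dist_triangle3)
  qed
  have "(\<Union>p\<in>S. ball p (\<delta>/2)) \<subseteq> ball y (R + \<delta>/2)"
  proof
    fix z assume "z \<in> (\<Union>p\<in>S. ball p (\<delta>/2))"
    then obtain p where "p \<in> S" "dist p z < \<delta>/2" by auto
    moreover have "dist y p \<le> R" using assms(2) \<open>p \<in> S\<close> by auto
    ultimately show "z \<in> ball y (R + \<delta>/2)" using dist_triangle[of y z p] by simp
  qed
  have "real (card S) * (?v * (\<delta>/2) ^ DIM('a)) = (\<Sum>p\<in>S. measure lborel (ball p (\<delta>/2)))"
    using \<open>0 < \<delta>\<close> by (simp add: content_ball)
  also have "\<dots> = measure lborel (\<Union>p\<in>S. ball p (\<delta>/2))"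
    using assms(1) disj \<open>0 < \<delta>\<close> by (intro measure_finite_Union[symmetric]) (auto simp: emeasure_ball)
  also have "\<dots> \<le> measure lborel (ball y (R + \<delta>/2))"
    using \<open>(\<Union>p\<in>S. ball p (\<delta>/2)) \<subseteq> ball y (R + \<delta>/2)\<close> assms(3,4)
    by (intro measure_mono_fmeasurable) (auto intro!: fmeasurableI borel_open simp: emeasure_ball)
  also have "\<dots> = ?v * (R + \<delta>/2) ^ DIM('a)"
    using assms(3,4) by (simp add: content_ball)
  finally have "?v * (real (card S) * (\<delta>/2) ^ DIM('a)) \<le> ?v * (R + \<delta>/2) ^ DIM('a)"
    by (simp add: ac_simps)
  then have "real (card S) * (\<delta>/2) ^ DIM('a) \<le> (R + \<delta>/2) ^ DIM('a)"
    by (simp add: mult_le_cancel_left_pos)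
  then have "real (card S) \<le> (R + \<delta>/2) ^ DIM('a) / (\<delta>/2) ^ DIM('a)"
    using \<open>0 < \<delta>\<close> by (simp add: le_divide_eq)
  also have "\<dots> = ((R + \<delta>/2) / (\<delta>/2)) ^ DIM('a)"
    by (simp only: power_divide)
  also have "(R + \<delta>/2) / (\<delta>/2) = (2 * R + \<delta>) / \<delta>"
    using \<open>0 < \<delta>\<close> by (simp add: field_simps)
  finally show ?thesis .
qed

lemma covnum_le_card:
  assumes "finite S" "S \<subseteq> F" "F \<subseteq> (\<Union>y\<in>S. cball y r)"
  shows "covnum r F \<le> card S"
  unfolding covnum_def using assms by (intro cInf_lower) auto

lemma covnum_attained:
  fixes F :: "'a::metric_space set"
  assumes "compact F" "0 < r"
  obtains S where "finite S" "S \<subseteq> F" "F \<subseteq> (\<Union>y\<in>S. cball y r)" "covnum r F = card S"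
proof -
  obtain S where "S \<subseteq> F" "finite S" "F \<subseteq> (\<Union>y\<in>S. ball y r)"
  proof (rule compactE_image[OF assms(1), of F "\<lambda>y. ball y r"])
    show "F \<subseteq> (\<Union>y\<in>F. ball y r)"
      using assms(2) by force
  qed auto
  moreover have "(\<Union>y\<in>S. ball y r) \<subseteq> (\<Union>y\<in>S. cball y r)"
    by auto
  ultimately have "card S \<in> {card S | S. finite S \<and> S \<subseteq> F \<and> F \<subseteq> (\<Union>y\<in>S. cball y r)}"
    by blast
  then have "covnum r F \<in> {card S | S. finite S \<and> S \<subseteq> F \<and> F \<subseteq> (\<Union>y\<in>S. cball y r)}"
    unfolding covnum_def by (intro Inf_nat_def1) blast
  then show thesis using that by blast
qed

lemma card_le_covnum_if_separated:
  fixes F :: "'a::metric_space set"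
  assumes "compact F" "0 < r" "P \<subseteq> F"
    and sep: "\<And>p q. p \<in> P \<Longrightarrow> q \<in> P \<Longrightarrow> p \<noteq> q \<Longrightarrow> 2 * r < dist p q"
  shows "card P \<le> covnum r F"
proof -
  obtain S where S: "finite S" "F \<subseteq> (\<Union>y\<in>S. cball y r)" "covnum r F = card S"
    using covnum_attained[OF assms(1,2)] by metis
  then have "\<forall>p\<in>P. \<exists>y. y \<in> S \<and> p \<in> cball y r"
    using \<open>P \<subseteq> F\<close> by blast
  then obtain f where f: "\<forall>p\<in>P. f p \<in> S \<and> p \<in> cball (f p) r"
    by (rule bchoice[elim_format]) blast
  have "inj_on f P"
  proof (rule inj_onI, rule ccontr)
    fix p q assume "p \<in> P" "q \<in> P" "f p = f q" "p \<noteq> q"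
    then have "dist (f p) p \<le> r" "dist (f p) q \<le> r"
      using f by auto
    then have "dist p q \<le> 2 * r"
      using dist_triangle3[of p q "f p"] by linarith
    with sep[OF \<open>p \<in> P\<close> \<open>q \<in> P\<close> \<open>p \<noteq> q\<close>] show False by simp
  qed
  then have "card P \<le> card S"
    using f S(1) by (intro card_inj_on_le) auto
  with S(3) show ?thesis by simp
qed

lemma covnum_le_if_subset_cball:
  fixes F :: "'a::euclidean_space set"
  assumes "F \<subseteq> cball y R" "0 < r" "0 \<le> R"
  shows "real (covnum r F) \<le> ((2 * R + r) / r) ^ DIM('a)"
proof -
  define separated where
    "separated S \<longleftrightarrow> finite S \<and> S \<subseteq> F \<and> (\<forall>p\<in>S. \<forall>q\<in>S. p \<noteq> q \<longrightarrow> r < dist p q)" for S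
  have card_bound: "real (card S) \<le> ((2 * R + r) / r) ^ DIM('a)" if "separated S" for S
    using that assms unfolding separated_def
    by (intro card_separated_in_cball_le[where y = y]) (auto intro: less_imp_le)
  \<comment> \<open>a maximal r-separated subset of F is an r-net of F\<close>
  have "\<exists>S. separated S \<and> (\<forall>S'. separated S' \<longrightarrow> card S' \<le> card S)"
  proof (rule ex_has_greatest_nat[of separated "{}" card "nat \<lceil>((2 * R + r) / r) ^ DIM('a)\<rceil> + 1"])
    show "separated {}" by (simp add: separated_def)
    show "\<forall>S. separated S \<longrightarrow> card S < nat \<lceil>((2 * R + r) / r) ^ DIM('a)\<rceil> + 1"
    proof (intro allI impI)
      fix S assume "separated S"
      from card_bound[OF this] show "card S < nat \<lceil>((2 * R + r) / r) ^ DIM('a)\<rceil> + 1"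
        by linarith
    qed
  qed
  then obtain S where "separated S" and S_max: "\<And>S'. separated S' \<Longrightarrow> card S' \<le> card S"
    by blast
  have "F \<subseteq> (\<Union>p\<in>S. cball p r)"
  proof (rule subsetI, rule ccontr)
    fix z assume "z \<in> F" "z \<notin> (\<Union>p\<in>S. cball p r)"
    then have "separated (insert z S)" and "z \<notin> S"
      using \<open>separated S\<close> \<open>0 < r\<close> by (auto simp: separated_def dist_commute)
    with S_max[of "insert z S"] \<open>separated S\<close> show False by (simp add: separated_def)
  qed
  then have "covnum r F \<le> card S"
    using \<open>separated S\<close> by (intro covnum_le_card) (auto simp: separated_def)
  with card_bound[OF \<open>separated S\<close>] show ?thesis by linarith
qed

definition lower_regular :: "'a::metric_space set \<Rightarrow> real \<Rightarrow> real \<Rightarrow> bool" where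
  "lower_regular K s C \<longleftrightarrow> (\<forall>r R. 0 < r \<and> r \<le> R \<and> R < 1 \<longrightarrow>
     (\<forall>x\<in>K. C * (R / r) powr s \<le> real (covnum r (cball x R \<inter> K))))"

lemma lower_dim_eq_Sup_lower_regular:
  "lower_dim K = Sup (insert 0 {s. 0 < s \<and> (\<exists>C>0. lower_regular K s C)})"
  unfolding lower_dim_def lower_regular_def ..

lemma lower_regular_exponent_le_DIM:
  fixes K :: "'a::euclidean_space set"
  assumes "K \<noteq> {}" "0 < C" "lower_regular K s C"
  shows "s \<le> DIM('a)"
proof (rule ccontr)
  let ?d = "DIM('a)"
  assume "\<not> s \<le> ?d"
  obtain x0 where "x0 \<in> K" using assms(1) by blast
  have growth: "C * t powr s \<le> 3 ^ ?d * t powr ?d" if "1 \<le> t" for t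
  proof -
    have "C * t powr s = C * ((1/2) / (1 / (2 * t))) powr s"
      using that by simp
    also have "\<dots> \<le> real (covnum (1 / (2 * t)) (cball x0 (1/2) \<inter> K))"
      using \<open>x0 \<in> K\<close> that
      by (intro assms(3)[unfolded lower_regular_def, rule_format]) (auto simp: field_simps)
    also have "\<dots> \<le> ((2 * (1/2) + 1 / (2 * t)) / (1 / (2 * t))) ^ ?d"
      using that by (intro covnum_le_if_subset_cball) auto
    also have "\<dots> \<le> (3 * t) ^ ?d"
      using that by (intro power_mono) (auto simp: field_simps)
    also have "\<dots> = 3 ^ ?d * t powr ?d"
      using that by (simp add: power_mult_distrib powr_realpow)
    finally show ?thesis .
  qed
  \<comment> \<open>large enough that the growth bound fails at t\<close>
  define t where "t = (3 ^ ?d / C + 1) powr (1 / (s - ?d))"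
  have "1 \<le> t"
    unfolding t_def using \<open>\<not> s \<le> ?d\<close> assms(2) by (intro ge_one_powr_ge_zero) auto
  have "t powr (s - ?d) = 3 ^ ?d / C + 1"
    unfolding t_def using \<open>\<not> s \<le> ?d\<close> assms(2) by (simp add: powr_powr)
  then have "C * t powr s = (3 ^ ?d + C) * t powr ?d"
    using assms(2) \<open>1 \<le> t\<close> by (simp add: powr_diff field_simps)
  with growth[OF \<open>1 \<le> t\<close>] \<open>1 \<le> t\<close> assms(2) show False
    by (simp add: mult_le_cancel_right)
qed

definition tree_lower_regular :: "real \<Rightarrow> nat list set \<Rightarrow> real \<Rightarrow> real \<Rightarrow> bool" where
  "tree_lower_regular \<rho> T s C \<longleftrightarrow> (\<forall>m k. m \<le> k \<longrightarrow> (\<forall>a\<in>T. length a = m \<longrightarrow>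
     C * \<rho> powr ((real m - real k) * s) \<le> real (card {b\<in>T. length b = k \<and> cyl b \<subseteq> cyl a})))"

lemma lower_dim_tree_eq_Sup_tree_lower_regular:
  "lower_dim_tree \<rho> T = Sup (insert 0 {s. 0 < s \<and> (\<exists>C>0. tree_lower_regular \<rho> T s C)})"
  unfolding lower_dim_tree_def tree_lower_regular_def ..

lemma cyl_subset_imp_prefix:
  assumes "length a \<le> length b" "cyl b \<subseteq> cyl a"
  shows "take (length a) b = a"
proof -
  define \<omega> where "\<omega> i = (if i < length b then b ! i else 0)" for i
  have "\<omega> \<in> cyl b" unfolding cyl_def \<omega>_def by simp
  with assms(2) have "\<omega> \<in> cyl a" by blast
  with assms(1) show ?thesis
    unfolding cyl_def \<omega>_def by (intro nth_equalityI) auto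
qed

lemma exists_power_level:
  fixes \<rho> t :: real
  assumes "0 < \<rho>" "\<rho> < 1" "0 < t" "t \<le> \<rho> ^ m"
  obtains k where "m \<le> k" "t \<le> \<rho> ^ k" "\<rho> ^ Suc k < t"
proof -
  obtain n where "\<rho> ^ n < t"
    using real_arch_pow_inv[OF assms(3,2)] by blast
  moreover have "\<rho> ^ Suc n \<le> \<rho> ^ n"
    using assms(1,2) by (intro power_decreasing) auto
  ultimately have ex: "\<exists>n. \<rho> ^ Suc n < t" by (meson le_less_trans)
  define k where "k = (LEAST n. \<rho> ^ Suc n < t)"
  have below: "\<rho> ^ Suc k < t"
    unfolding k_def by (rule LeastI_ex[OF ex])
  moreover have "t \<le> \<rho> ^ k"
  proof (cases k)
    case 0
    then show ?thesis using assms by (metis order.trans power_0 power_le_one less_imp_le)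
  next
    case (Suc j)
    then have "\<not> \<rho> ^ Suc j < t"
      unfolding k_def by (metis lessI not_less_Least)
    then show ?thesis using Suc by simp
  qed
  moreover have "m \<le> k"
  proof (rule ccontr)
    assume "\<not> m \<le> k"
    then have "\<rho> ^ m \<le> \<rho> ^ Suc k"
      using assms(1,2) by (intro power_decreasing) auto
    with below assms(4) show False by simp
  qed
  ultimately show thesis using that by blast
qed

locale partition_tree =
  fixes K :: "'a::euclidean_space set" and \<rho> :: real
    and N :: "nat \<Rightarrow> 'i set" and Q :: "nat \<Rightarrow> 'i \<Rightarrow> 'a set" and x :: "nat \<Rightarrow> 'i \<Rightarrow> 'a"
    and T :: "nat list set" and lab :: "nat list \<Rightarrow> 'i"
    and c D :: real
  assumes partition: "inner_regular_partition K \<rho> N Q x"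
    and tree: "corresponding_tree N Q T lab"
    and c_pos: "0 < c" and D_pos: "0 < D"
    and inner_ball: "i \<in> N k \<Longrightarrow> cball (x k i) (c * \<rho> ^ k) \<inter> K \<subseteq> Q k i"
    and outer_ball: "i \<in> N k \<Longrightarrow> Q k i \<subseteq> cball (x k i) (D * \<rho> ^ k)"
    and compact: "compact K" and rho_pos: "0 < \<rho>" and rho_less_1: "\<rho> < 1"
begin

lemma x_in_Q: "i \<in> N k \<Longrightarrow> x k i \<in> Q k i"
  using partition unfolding inner_regular_partition_def by (elim conjE) blast

lemma card_N_0: "card (N 0) = 1"
  using partition unfolding inner_regular_partition_def by (elim conjE)

lemma UN_Q_eq: "(\<Union>i\<in>N k. Q k i) = K"
  using partition unfolding inner_regular_partition_def by (elim conjE) blast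

lemma Q_subset: "i \<in> N k \<Longrightarrow> Q k i \<subseteq> K"
  using UN_Q_eq by blast

lemma Q_disjoint: "i \<in> N k \<Longrightarrow> j \<in> N k \<Longrightarrow> i \<noteq> j \<Longrightarrow> Q k i \<inter> Q k j = {}"
  using partition unfolding inner_regular_partition_def by (elim conjE) blast

lemma Q_nested: "k \<le> m \<Longrightarrow> i \<in> N k \<Longrightarrow> j \<in> N m \<Longrightarrow> Q k i \<inter> Q m j = {} \<or> Q m j \<subseteq> Q k i"
  using partition unfolding inner_regular_partition_def by (elim conjE) blast

lemma centres_separated:
  assumes "i \<in> N k" "j \<in> N k" "i \<noteq> j"
  shows "c * \<rho> ^ k < dist (x k i) (x k j)"
proof (rule ccontr)
  assume "\<not> c * \<rho> ^ k < dist (x k i) (x k j)"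
  then have "x k j \<in> Q k i"
    using inner_ball[OF assms(1)] x_in_Q[OF assms(2)] Q_subset[OF assms(2)] by auto
  with x_in_Q[OF assms(2)] Q_disjoint[OF assms] show False by blast
qed

lemma root_in_tree: "[] \<in> T" and lab_root: "lab [] \<in> N 0"
  using tree unfolding corresponding_tree_def by simp_all

lemma butlast_in_tree: "w \<in> T \<Longrightarrow> butlast w \<in> T"
  using tree root_in_tree unfolding corresponding_tree_def by (elim conjE) (cases "w = []"; simp)

lemma snoc_in_tree_iff:
  "a \<in> T \<Longrightarrow> a @ [n] \<in> T \<longleftrightarrow> n \<in> {1..card (children N Q (length a) (lab a))}"
  using tree unfolding corresponding_tree_def by (elim conjE) blast

lemma bij_betw_lab_snoc:
  "a \<in> T \<Longrightarrow> bij_betw (\<lambda>n. lab (a @ [n])) {1..card (children N Q (length a) (lab a))}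
     (children N Q (length a) (lab a))"
  using tree unfolding corresponding_tree_def by (elim conjE) blast

lemma lab_snoc_in_children:
  assumes "a @ [n] \<in> T"
  shows "a \<in> T" and "lab (a @ [n]) \<in> children N Q (length a) (lab a)"
proof -
  show "a \<in> T"
    using butlast_in_tree[OF assms] by simp
  then show "lab (a @ [n]) \<in> children N Q (length a) (lab a)"
    using assms by (intro bij_betw_apply[OF bij_betw_lab_snoc]) (auto simp: snoc_in_tree_iff)
qed

lemma lab_in_N: "w \<in> T \<Longrightarrow> lab w \<in> N (length w)"
proof (induction w rule: rev_induct)
  case Nil
  show ?case using lab_root by simp
next
  case (snoc n a)
  then show ?case using lab_snoc_in_children[OF snoc.prems] by (auto simp: children_def)
qed

lemma Q_lab_subset_prefix:
  "w \<in> T \<Longrightarrow> m \<le> length w \<Longrightarrow> take m w \<in> T \<and> Q (length w) (lab w) \<subseteq> Q m (lab (take m w))"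
proof (induction w rule: rev_induct)
  case (snoc n a)
  show ?case
  proof (cases "m = length (a @ [n])")
    case False
    then have "m \<le> length a" using snoc.prems by simp
    then have "take m a \<in> T \<and> Q (length a) (lab a) \<subseteq> Q m (lab (take m a))"
      using snoc.IH lab_snoc_in_children(1)[OF snoc.prems(1)] by blast
    moreover have "Q (Suc (length a)) (lab (a @ [n])) \<subseteq> Q (length a) (lab a)"
      using lab_snoc_in_children(2)[OF snoc.prems(1)] by (simp add: children_def)
    ultimately show ?thesis
      using \<open>m \<le> length a\<close> by auto
  qed (use snoc.prems in simp)
qed simp

lemma lab_inj_on_level:
  assumes "a \<in> T" "b \<in> T" "length a = length b" "lab a = lab b"
  shows "a = b"
  using assms
proof (induction a arbitrary: b rule: rev_induct)
  case (snoc p a)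
  then obtain b' q where b: "b = b' @ [q]"
    by (metis length_0_conv snoc_eq_iff_butlast)
  note pa = lab_snoc_in_children[OF snoc.prems(1)]
  note qb = lab_snoc_in_children[OF snoc.prems(2)[unfolded b]]
  have len: "length a = length b'" using snoc.prems(3) b by simp
  \<comment> \<open>the common child is non-empty and lies in both parents, which are cells of one level\<close>
  have "lab a = lab b'"
  proof (rule ccontr)
    assume "lab a \<noteq> lab b'"
    then have "Q (length a) (lab a) \<inter> Q (length a) (lab b') = {}"
      using Q_disjoint lab_in_N pa(1) qb(1) len by metis
    moreover have "x (Suc (length a)) (lab (a @ [p])) \<in> Q (length a) (lab a) \<inter> Q (length a) (lab b')"
      using pa(2) qb(2) x_in_Q len snoc.prems(4) b by (auto simp: children_def)
    ultimately show False by blast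
  qed
  then have "a = b'" using snoc.IH pa(1) qb(1) len by blast
  moreover have "p = q"
    using bij_betw_imp_inj_on[OF bij_betw_lab_snoc[OF pa(1)]] snoc.prems(1,2,4)
      snoc_in_tree_iff[OF pa(1)] b \<open>a = b'\<close> by (auto dest: inj_onD)
  ultimately show ?case using b by simp
qed simp

lemma ex_word_with_lab: "i \<in> N k \<Longrightarrow> \<exists>a\<in>T. length a = k \<and> lab a = i"
proof (induction k arbitrary: i)
  case 0
  obtain y where "N 0 = {y}"
    using card_N_0 by (rule card_1_singletonE)
  then have "i = lab []"
    using 0 lab_root by simp
  then show ?case using root_in_tree by auto
next
  case (Suc k)
  \<comment> \<open>the level-k cell meeting Q (Suc k) i contains it, so its word is the parent\<close>
  obtain i' where i': "i' \<in> N k" "x (Suc k) i \<in> Q k i'"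
    using x_in_Q[OF Suc.prems] Q_subset[OF Suc.prems] UN_Q_eq[of k] by blast
  then have "Q (Suc k) i \<subseteq> Q k i'"
    using Q_nested[of k "Suc k", OF _ i'(1) Suc.prems] x_in_Q[OF Suc.prems] by auto
  obtain a where a: "a \<in> T" "length a = k" "lab a = i'"
    using Suc.IH[OF i'(1)] by blast
  have "i \<in> children N Q (length a) (lab a)"
    using \<open>Q (Suc k) i \<subseteq> Q k i'\<close> Suc.prems a by (simp add: children_def)
  then have "i \<in> (\<lambda>n. lab (a @ [n])) ` {1..card (children N Q (length a) (lab a))}"
    using bij_betw_imp_surj_on[OF bij_betw_lab_snoc[OF a(1)]] by simp
  then obtain n where "n \<in> {1..card (children N Q (length a) (lab a))}" "lab (a @ [n]) = i"
    by blast
  then show ?case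
    using snoc_in_tree_iff[OF a(1)] a(2) by (intro bexI[of _ "a @ [n]"]) auto
qed

lemma Q_descendant_subset:
  assumes "b \<in> T" "length a \<le> length b" "cyl b \<subseteq> cyl a"
  shows "Q (length b) (lab b) \<subseteq> Q (length a) (lab a)"
  using Q_lab_subset_prefix[OF assms(1,2)] cyl_subset_imp_prefix[OF assms(2,3)] by simp

lemma card_descendants_le_covnum:
  assumes "length a \<le> k" "Q (length a) (lab a) \<subseteq> F" "compact F" "0 < r" "2 * r \<le> c * \<rho> ^ k"
  shows "card {b\<in>T. length b = k \<and> cyl b \<subseteq> cyl a} \<le> covnum r F"
proof -
  let ?B = "{b\<in>T. length b = k \<and> cyl b \<subseteq> cyl a}"
  have lab_B: "lab ` ?B \<subseteq> N k"
    using lab_in_N by auto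
  have "inj_on lab ?B"
    using lab_inj_on_level by (auto intro: inj_onI)
  moreover have "inj_on (x k) (N k)"
    using centres_separated c_pos rho_pos
    by (intro inj_onI) (metis dist_self mult_pos_pos not_less_iff_gr_or_eq zero_less_power)
  ultimately have "card ?B = card (x k ` lab ` ?B)"
    using lab_B by (simp add: card_image inj_on_subset)
  also have "\<dots> \<le> covnum r F"
  proof (rule card_le_covnum_if_separated[OF assms(3,4)])
    show "x k ` lab ` ?B \<subseteq> F"
      using x_in_Q lab_in_N Q_descendant_subset assms(1,2) by fastforce
    fix p q assume "p \<in> x k ` lab ` ?B" "q \<in> x k ` lab ` ?B" "p \<noteq> q"
    then obtain i j where ij: "i \<in> lab ` ?B" "j \<in> lab ` ?B" "p = x k i" "q = x k j"
      by (meson imageE)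
    moreover have "i \<in> N k" "j \<in> N k" "i \<noteq> j"
      using ij lab_B \<open>p \<noteq> q\<close> by auto
    ultimately have "c * \<rho> ^ k < dist p q"
      using centres_separated by simp
    with assms(5) show "2 * r < dist p q"
      by simp
  qed
  finally show ?thesis .
qed

lemma ex_word_in_ball:
  assumes "x0 \<in> K" "0 < R" "R \<le> 1"
  obtains a where "a \<in> T" "Q (length a) (lab a) \<subseteq> cball x0 R \<inter> K"
    and "\<rho> * min 1 (1 / (2 * D)) * R \<le> \<rho> ^ length a"
proof -
  define t where "t = \<rho> * min 1 (R / (2 * D))"
  have "0 < t"
    using rho_pos D_pos assms(2) by (simp add: t_def)
  moreover have "t \<le> \<rho> ^ 0"
    using rho_pos rho_less_1 D_pos assms(2) unfolding t_def power_0 by (intro mult_le_one) auto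
  ultimately obtain m where m: "t \<le> \<rho> ^ m" "\<rho> ^ Suc m < t"
    using exists_power_level[OF rho_pos rho_less_1] by metis
  have "t \<le> \<rho> * (R / (2 * D))"
    unfolding t_def using rho_pos by (intro mult_left_mono) auto
  with m(2) have "\<rho> * \<rho> ^ m < \<rho> * (R / (2 * D))"
    by simp
  then have "\<rho> ^ m < R / (2 * D)"
    using rho_pos by (simp only: mult_less_cancel_left_pos)
  then have "2 * D * \<rho> ^ m \<le> R"
    using D_pos by (simp add: pos_less_divide_eq mult.commute)
  obtain i where i: "i \<in> N m" "x0 \<in> Q m i"
    using UN_Q_eq[of m] assms(1) by blast
  obtain a where a: "a \<in> T" "length a = m" "lab a = i"
    using ex_word_with_lab[OF i(1)] by blast
  have "Q m i \<subseteq> cball x0 R"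
  proof
    fix z assume "z \<in> Q m i"
    then have "dist (x m i) z \<le> D * \<rho> ^ m" "dist (x m i) x0 \<le> D * \<rho> ^ m"
      using outer_ball[OF i(1)] i(2) by auto
    with \<open>2 * D * \<rho> ^ m \<le> R\<close> show "z \<in> cball x0 R"
      using dist_triangle3[of x0 z "x m i"] by simp
  qed
  with Q_subset[OF i(1)] a have "Q (length a) (lab a) \<subseteq> cball x0 R \<inter> K"
    by simp
  moreover have "min 1 (1 / (2 * D)) * R \<le> min 1 (R / (2 * D))"
  proof (rule min.boundedI)
    show "min 1 (1 / (2 * D)) * R \<le> 1"
      using assms(2,3) D_pos by (intro mult_le_one) auto
    show "min 1 (1 / (2 * D)) * R \<le> R / (2 * D)"
      using assms(2) by (intro order.trans[OF mult_right_mono[OF min.cobounded2]]) auto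
  qed
  then have "\<rho> * min 1 (1 / (2 * D)) * R \<le> t"
    unfolding t_def using rho_pos by (simp add: mult.assoc)
  ultimately show thesis
    using that[OF a(1)] a(2) m(1) by simp
qed

lemma covnum_ge_descendant_count:
  assumes "tree_lower_regular \<rho> T s C" "0 < C" "0 \<le> s"
    and "a \<in> T" "Q (length a) (lab a) \<subseteq> F" "compact F" "0 < r" "2 * r / c \<le> \<rho> ^ length a"
  shows "C * (c * \<rho> * \<rho> ^ length a / (2 * r)) powr s \<le> covnum r F"
proof -
  let ?m = "length a"
  obtain k where k: "?m \<le> k" "2 * r / c \<le> \<rho> ^ k" "\<rho> ^ Suc k < 2 * r / c"
    using exists_power_level[OF rho_pos rho_less_1 _ assms(8)] assms(7) c_pos by auto
  \<comment> \<open>k is the finest level whose centres are still 2r-separated, so \<rho>^k is comparable to r\<close>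
  have "\<rho> ^ k < 2 * r / (c * \<rho>)"
    using k(3) c_pos rho_pos by (simp add: field_simps)
  then have "\<rho> ^ ?m * (c * \<rho> / (2 * r)) \<le> \<rho> ^ ?m / \<rho> ^ k"
    using rho_pos c_pos assms(7) by (simp add: field_simps)
  also have "\<dots> = \<rho> powr (real ?m - real k)"
    using rho_pos by (simp add: powr_diff powr_realpow)
  finally have "(c * \<rho> * \<rho> ^ ?m / (2 * r)) powr s \<le> (\<rho> powr (real ?m - real k)) powr s"
    using rho_pos c_pos assms(3,7) by (intro powr_mono2) (auto simp: field_simps)
  then have "C * (c * \<rho> * \<rho> ^ ?m / (2 * r)) powr s \<le> C * \<rho> powr ((real ?m - real k) * s)"
    using assms(2) by (simp add: powr_powr)
  also have "\<dots> \<le> card {b\<in>T. length b = k \<and> cyl b \<subseteq> cyl a}"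
    using assms(1,4) k(1) unfolding tree_lower_regular_def by blast
  also have "\<dots> \<le> covnum r F"
    using card_descendants_le_covnum[OF k(1) assms(5,6,7)] k(2) c_pos
    by (simp add: divide_le_eq mult.commute)
  finally show ?thesis .
qed

lemma covnum_ge_word_scale:
  assumes "tree_lower_regular \<rho> T s C" "0 < C" "0 < s"
    and "a \<in> T" "Q (length a) (lab a) \<subseteq> F" "compact F" "F \<noteq> {}" "0 < r"
  shows "min C 1 * (c * \<rho> * \<rho> ^ length a / (2 * r)) powr s \<le> covnum r F"
proof (cases "2 * r / c \<le> \<rho> ^ length a")
  case True
  have "min C 1 * (c * \<rho> * \<rho> ^ length a / (2 * r)) powr s
      \<le> C * (c * \<rho> * \<rho> ^ length a / (2 * r)) powr s"
    by (intro mult_right_mono) auto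
  also have "\<dots> \<le> covnum r F"
    using covnum_ge_descendant_count[OF assms(1,2) _ assms(4-6,8) True] assms(3) by simp
  finally show ?thesis .
next
  case False
  \<comment> \<open>then r is comparable to the size of the cell, and the trivial bound 1 \<le> covnum r F suffices\<close>
  then have "c * \<rho> ^ length a < 2 * r"
    using c_pos by (simp add: not_le pos_less_divide_eq mult.commute)
  moreover have "\<rho> * (c * \<rho> ^ length a) \<le> c * \<rho> ^ length a"
    using c_pos rho_pos rho_less_1 by (intro mult_left_le_one_le) auto
  ultimately have "c * \<rho> * \<rho> ^ length a / (2 * r) \<le> 1"
    using assms(8) by (simp add: ac_simps)
  then have "(c * \<rho> * \<rho> ^ length a / (2 * r)) powr s \<le> 1"
    using assms(3,8) c_pos rho_pos by (intro powr_le1) auto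
  then have "min C 1 * (c * \<rho> * \<rho> ^ length a / (2 * r)) powr s \<le> 1"
    by (intro mult_le_one) auto
  also obtain p where "p \<in> F"
    using assms(7) by blast
  then have "1 \<le> real (covnum r F)"
    using card_le_covnum_if_separated[OF assms(6,8), of "{p}"] by simp
  finally show ?thesis .
qed

lemma covnum_ge_scale_ratio:
  assumes "tree_lower_regular \<rho> T s C" "0 < C" "0 < s" "x0 \<in> K" "0 < r" "r \<le> R" "R < 1"
  shows "min C 1 * (c * \<rho> ^ 2 * min 1 (1 / (2 * D)) / 2 * (R / r)) powr s
    \<le> covnum r (cball x0 R \<inter> K)"
proof -
  have "0 < R" "R \<le> 1"
    using assms(5-7) by auto
  then obtain a where a: "a \<in> T" "Q (length a) (lab a) \<subseteq> cball x0 R \<inter> K"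
    and lower: "\<rho> * min 1 (1 / (2 * D)) * R \<le> \<rho> ^ length a"
    by (rule ex_word_in_ball[OF assms(4)])
  have "x0 \<in> cball x0 R \<inter> K"
    using assms(4) \<open>0 < R\<close> by simp
  then have F: "compact (cball x0 R \<inter> K)" "cball x0 R \<inter> K \<noteq> {}"
    using compact by (blast intro: closed_Int_compact closed_cball)+
  have "c * \<rho> ^ 2 * min 1 (1 / (2 * D)) / 2 * (R / r) \<le> c * \<rho> * \<rho> ^ length a / (2 * r)"
    using lower c_pos rho_pos assms(5) by (simp add: field_simps power2_eq_square)
  then have "(c * \<rho> ^ 2 * min 1 (1 / (2 * D)) / 2 * (R / r)) powr s
      \<le> (c * \<rho> * \<rho> ^ length a / (2 * r)) powr s"
    using c_pos rho_pos D_pos assms(3,5,6) by (intro powr_mono2) auto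
  then have "min C 1 * (c * \<rho> ^ 2 * min 1 (1 / (2 * D)) / 2 * (R / r)) powr s
      \<le> min C 1 * (c * \<rho> * \<rho> ^ length a / (2 * r)) powr s"
    using assms(2) by (intro mult_left_mono) auto
  also have "\<dots> \<le> covnum r (cball x0 R \<inter> K)"
    by (rule covnum_ge_word_scale[OF assms(1-3) a F assms(5)])
  finally show ?thesis .
qed

lemma lower_regular_if_tree_lower_regular:
  assumes "tree_lower_regular \<rho> T s C" "0 < C" "0 < s"
  shows "\<exists>C'>0. lower_regular K s C'"
proof (intro exI conjI)
  let ?\<gamma> = "c * \<rho> ^ 2 * min 1 (1 / (2 * D)) / 2"
  have "0 < ?\<gamma>"
    using c_pos rho_pos D_pos by simp
  then show "0 < min C 1 * ?\<gamma> powr s"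
    using assms(2) by (intro mult_pos_pos) auto
  show "lower_regular K s (min C 1 * ?\<gamma> powr s)"
    unfolding lower_regular_def
  proof (intro allI impI ballI)
    fix r R :: real and x0 assume "0 < r \<and> r \<le> R \<and> R < 1" "x0 \<in> K"
    then have "min C 1 * (?\<gamma> * (R / r)) powr s \<le> covnum r (cball x0 R \<inter> K)"
      by (intro covnum_ge_scale_ratio[OF assms]) auto
    moreover have "(?\<gamma> * (R / r)) powr s = ?\<gamma> powr s * (R / r) powr s"
      by (rule powr_mult)
    ultimately show "min C 1 * ?\<gamma> powr s * (R / r) powr s \<le> covnum r (cball x0 R \<inter> K)"
      by (simp add: mult.assoc)
  qed
qed

end

theorem lemma3p5:
  fixes K :: "'a::euclidean_space set" and \<rho> :: real
    and N :: "nat \<Rightarrow> 'i set" and Q :: "nat \<Rightarrow> 'i \<Rightarrow> 'a set" and x :: "nat \<Rightarrow> 'i \<Rightarrow> 'a"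
    and T :: "nat list set" and lab :: "nat list \<Rightarrow> 'i"
  assumes "compact K" and "K \<noteq> {}"
    and "0 < \<rho>" and "\<rho> < 1"
    and "inner_regular_partition K \<rho> N Q x"
    and "corresponding_tree N Q T lab"
  shows "lower_dim_tree \<rho> T \<le> lower_dim K"
proof -
  obtain c D where "0 < c" "0 < D" and balls: "\<forall>k. \<forall>i\<in>N k.
      cball (x k i) (c * \<rho> ^ k) \<inter> K \<subseteq> Q k i \<and> Q k i \<subseteq> cball (x k i) (D * \<rho> ^ k)"
    using assms(5) unfolding inner_regular_partition_def by (elim conjE) blast
  interpret partition_tree K \<rho> N Q x T lab c D
    using assms balls \<open>0 < c\<close> \<open>0 < D\<close> by unfold_locales auto
  have "{s. 0 < s \<and> (\<exists>C>0. tree_lower_regular \<rho> T s C)} \<subseteq> {s. 0 < s \<and> (\<exists>C>0. lower_regular K s C)}"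
    using lower_regular_if_tree_lower_regular by blast
  moreover have "bdd_above (insert 0 {s. 0 < s \<and> (\<exists>C>0. lower_regular K s C)})"
    using lower_regular_exponent_le_DIM[OF assms(2)]
    by (intro bdd_aboveI[where M = "real DIM('a)"]) auto
  ultimately show ?thesis
    unfolding lower_dim_eq_Sup_lower_regular lower_dim_tree_eq_Sup_tree_lower_regular
    by (intro cSup_subset_mono) auto
qed

end
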